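(* Let $G$ be a bus graph containing an $(A,B)$-perp with vertices $x,y,z,A,A',B,B',C$ as defined below, and let $\Gamma$ be any realization of $G$. Then (1) $\Gamma(B)$ and $\Gamma(B')$ are parallel; (2) $\Gamma(A)$ and $\Gamma(B)$ are perpendicular; (3) $\Gamma(A)$ and $\Gamma(A')$ are parallel.
   Context: A bus graph is a finite bipartite graph $G=(\mathcal{B},\mathcal{C};\mathcal{E})$ with $\deg(c)\le 4$ for all $c\in\mathcal{C}$. A realization $\Gamma$ of $G$ in the integer grid is a drawing such that: (1) each $B\in\mathcal{B}$ is drawn as a closed line segment $\Gamma(B)$ along a grid line (a "bus"); (2) each $c\in\mathcal{C}$ is drawn as a grid point $\Gamma(c)$; (3) each edge $(B,c)\in\mathcal{E}$ is drawn as a closed line segment along a grid line between a point of $\Gamma(B)$ and $\Gamma(c)$, perpendicular to $\Gamma(B)$, containing no connectors or buses other than $\Gamma(B)$ and $\Gamma(c)$ (edges may cross other edges); (4) no two buses or connectors intersect. An $(A,B)$-perp is a bus graph component consisting of three distinct $\mathcal{C}$-vertices $x,y,z$, five distinct $\mathcal{B}$-vertices $A,A',B,B',C$, and the twelve edges $(A,x),(A',x),(B,x),(B',x)$, $(A,y),(A',y),(B,y),(C,y)$, $(A,z),(A',z),(B',z),(C,z)$. *)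

theory Defs
  imports "HOL-Analysis.Analysis"
begin

definition bus_graph :: "'b set \<Rightarrow> 'c set \<Rightarrow> ('b \<times> 'c) set \<Rightarrow> bool" where
  "bus_graph Bs Cs E \<longleftrightarrow> finite Bs \<and> finite Cs \<and> E \<subseteq> Bs \<times> Cs
     \<and> (\<forall>c\<in>Cs. card {B. (B, c) \<in> E} \<le> 4)"

datatype orientation = Hor | Ver

text \<open>A bus drawing: a closed segment along a grid line. If horizontal, it is
  the segment from (lo, lev) to (hi, lev); if vertical, from (lev, lo) to (lev, hi).\<close>

record bus_drawing =
  ori :: orientation
  lev :: int
  lo :: int
  hi :: int

definition pt :: "int \<times> int \<Rightarrow> real \<times> real" where
  "pt p = (real_of_int (fst p), real_of_int (snd p))"

definition bus_pts :: "bus_drawing \<Rightarrow> (real \<times> real) set" where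
  "bus_pts S = (case ori S of
      Hor \<Rightarrow> {(t, real_of_int (lev S)) | t. real_of_int (lo S) \<le> t \<and> t \<le> real_of_int (hi S)}
    | Ver \<Rightarrow> {(real_of_int (lev S), t) | t. real_of_int (lo S) \<le> t \<and> t \<le> real_of_int (hi S)})"

definition foot :: "bus_drawing \<Rightarrow> int \<times> int \<Rightarrow> int \<times> int" where
  "foot S q = (case ori S of Hor \<Rightarrow> (fst q, lev S) | Ver \<Rightarrow> (lev S, snd q))"

text \<open>An edge from bus S to connector point q can be drawn perpendicular to S
  iff the foot of the perpendicular lies on S; the drawing is then the closed
  segment between the foot and q.\<close>

definition edge_attachable :: "bus_drawing \<Rightarrow> int \<times> int \<Rightarrow> bool" where
  "edge_attachable S q \<longleftrightarrow> pt (foot S q) \<in> bus_pts S"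

definition edge_seg :: "bus_drawing \<Rightarrow> int \<times> int \<Rightarrow> (real \<times> real) set" where
  "edge_seg S q = closed_segment (pt (foot S q)) (pt q)"

definition realization ::
  "'b set \<Rightarrow> 'c set \<Rightarrow> ('b \<times> 'c) set \<Rightarrow> ('b \<Rightarrow> bus_drawing) \<Rightarrow> ('c \<Rightarrow> int \<times> int) \<Rightarrow> bool" where
  "realization Bs Cs E \<Gamma>b \<Gamma>c \<longleftrightarrow>
     (\<forall>B\<in>Bs. lo (\<Gamma>b B) \<le> hi (\<Gamma>b B))
   \<and> (\<forall>(B, c)\<in>E.
        edge_attachable (\<Gamma>b B) (\<Gamma>c c)
      \<and> (\<forall>B'\<in>Bs. B' \<noteq> B \<longrightarrow> edge_seg (\<Gamma>b B) (\<Gamma>c c) \<inter> bus_pts (\<Gamma>b B') = {})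
      \<and> (\<forall>c'\<in>Cs. c' \<noteq> c \<longrightarrow> pt (\<Gamma>c c') \<notin> edge_seg (\<Gamma>b B) (\<Gamma>c c)))
   \<and> (\<forall>B1\<in>Bs. \<forall>B2\<in>Bs. B1 \<noteq> B2 \<longrightarrow> bus_pts (\<Gamma>b B1) \<inter> bus_pts (\<Gamma>b B2) = {})
   \<and> (\<forall>c1\<in>Cs. \<forall>c2\<in>Cs. c1 \<noteq> c2 \<longrightarrow> \<Gamma>c c1 \<noteq> \<Gamma>c c2)
   \<and> (\<forall>B\<in>Bs. \<forall>c\<in>Cs. pt (\<Gamma>c c) \<notin> bus_pts (\<Gamma>b B))"

definition AB_perp ::
  "'b set \<Rightarrow> 'c set \<Rightarrow> ('b \<times> 'c) set \<Rightarrow> 'c \<Rightarrow> 'c \<Rightarrow> 'c \<Rightarrow> 'b \<Rightarrow> 'b \<Rightarrow> 'b \<Rightarrow> 'b \<Rightarrow> 'b \<Rightarrow> bool" where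
  "AB_perp Bs Cs E x y z A A' B B' C \<longleftrightarrow>
     x \<in> Cs \<and> y \<in> Cs \<and> z \<in> Cs \<and> distinct [x, y, z]
   \<and> A \<in> Bs \<and> A' \<in> Bs \<and> B \<in> Bs \<and> B' \<in> Bs \<and> C \<in> Bs \<and> distinct [A, A', B, B', C]
   \<and> {(A, x), (A', x), (B, x), (B', x),
      (A, y), (A', y), (B, y), (C, y),
      (A, z), (A', z), (B', z), (C, z)} \<subseteq> E"

end

theory Submission
  imports Defs
begin

text \<open>Two parallel buses attached to the same connector c have their edges on the line
  through c perpendicular to both, and neither bus may meet the other's edge; so their
  levels lie strictly on opposite sides of c. Hence at most two buses of each orientation
  are attached to c, and of four distinct buses at c, two are horizontal and two vertical.
  Applying this at x, y and z forces A, A' to be parallel and B, B' to be parallel and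
  perpendicular to A: otherwise B, B' and C would have pairwise distinct orientations.\<close>

fun normal_coord :: "orientation \<Rightarrow> int \<times> int \<Rightarrow> int" where
  "normal_coord Hor q = snd q"
| "normal_coord Ver q = fst q"

lemma Pair_in_closed_segment_same_fst_iff:
  "((a::real), t) \<in> closed_segment (a, u) (a, v) \<longleftrightarrow> (t::real) \<in> closed_segment u v"
  by (auto simp: closed_segment_def algebra_simps)

lemma Pair_in_closed_segment_same_snd_iff:
  "((t::real), a) \<in> closed_segment (u, a) (v, (a::real)) \<longleftrightarrow> t \<in> closed_segment u v"
  by (auto simp: closed_segment_def algebra_simps)

lemma separated_if_not_in_segments:
  fixes a b q :: real
  assumes "a \<notin> closed_segment b q" and "b \<notin> closed_segment a q"
  shows "(a - q) * (b - q) < 0"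
  using assms by (auto simp: closed_segment_eq_real_ivl mult_less_0_iff split: if_splits)

lemma foot_in_parallel_edge_seg_iff:
  assumes "ori S1 = ori S2"
  shows "pt (foot S2 q) \<in> edge_seg S1 q \<longleftrightarrow>
    real_of_int (lev S2) \<in> closed_segment (real_of_int (lev S1)) (real_of_int (normal_coord (ori S1) q))"
  using assms
  by (cases "ori S1") (simp_all add: edge_seg_def foot_def pt_def
      Pair_in_closed_segment_same_fst_iff Pair_in_closed_segment_same_snd_iff)

lemma foot_not_in_other_edge_seg:
  assumes "realization Bs Cs E \<Gamma>b \<Gamma>c" and "(P, c) \<in> E" and "(Q, c) \<in> E"
    and "Q \<in> Bs" and "Q \<noteq> P"
  shows "pt (foot (\<Gamma>b Q) (\<Gamma>c c)) \<notin> edge_seg (\<Gamma>b P) (\<Gamma>c c)"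
proof -
  have "pt (foot (\<Gamma>b Q) (\<Gamma>c c)) \<in> bus_pts (\<Gamma>b Q)"
    using assms(1,3) by (auto simp: realization_def edge_attachable_def)
  moreover have "edge_seg (\<Gamma>b P) (\<Gamma>c c) \<inter> bus_pts (\<Gamma>b Q) = {}"
    using assms(1,2) assms(4,5) unfolding realization_def by fastforce
  ultimately show ?thesis by blast
qed

lemma parallel_buses_on_opposite_sides:
  assumes R: "realization Bs Cs E \<Gamma>b \<Gamma>c"
    and "(B1, c) \<in> E" "(B2, c) \<in> E" "B1 \<in> Bs" "B2 \<in> Bs" "B1 \<noteq> B2"
    and par: "ori (\<Gamma>b B1) = ori (\<Gamma>b B2)"
  defines "n \<equiv> normal_coord (ori (\<Gamma>b B1)) (\<Gamma>c c)"
  shows "(lev (\<Gamma>b B1) - n) * (lev (\<Gamma>b B2) - n) < 0"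
proof -
  have "real_of_int (lev (\<Gamma>b B2)) \<notin> closed_segment (lev (\<Gamma>b B1)) n"
    using foot_not_in_other_edge_seg[OF R \<open>(B1, c) \<in> E\<close> \<open>(B2, c) \<in> E\<close>] assms
      foot_in_parallel_edge_seg_iff[OF par] by simp
  moreover have "real_of_int (lev (\<Gamma>b B1)) \<notin> closed_segment (lev (\<Gamma>b B2)) n"
    using foot_not_in_other_edge_seg[OF R \<open>(B2, c) \<in> E\<close> \<open>(B1, c) \<in> E\<close>] assms
      foot_in_parallel_edge_seg_iff[OF par[symmetric]] par by simp
  ultimately have "real_of_int ((lev (\<Gamma>b B1) - n) * (lev (\<Gamma>b B2) - n)) < 0"
    using separated_if_not_in_segments by simp
  then show ?thesis by linarith
qed

lemma no_three_parallel_buses_at_connector: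
  assumes R: "realization Bs Cs E \<Gamma>b \<Gamma>c"
    and "{(B1, c), (B2, c), (B3, c)} \<subseteq> E" "{B1, B2, B3} \<subseteq> Bs" "distinct [B1, B2, B3]"
    and "ori (\<Gamma>b B1) = ori (\<Gamma>b B2)"
  shows "ori (\<Gamma>b B3) \<noteq> ori (\<Gamma>b B1)"
proof
  assume "ori (\<Gamma>b B3) = ori (\<Gamma>b B1)"
  then have "(lev (\<Gamma>b Bi) - normal_coord (ori (\<Gamma>b B1)) (\<Gamma>c c))
      * (lev (\<Gamma>b Bj) - normal_coord (ori (\<Gamma>b B1)) (\<Gamma>c c)) < 0"
    if "Bi \<in> {B1, B2, B3}" "Bj \<in> {B1, B2, B3}" "Bi \<noteq> Bj" for Bi Bj
    using parallel_buses_on_opposite_sides[OF R, of Bi c Bj] that assms by auto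
  from this[of B1 B2] this[of B1 B3] this[of B2 B3] show False
    using assms(4) by (auto simp: mult_less_0_iff)
qed

lemma orientations_differ_at_connector:
  assumes R: "realization Bs Cs E \<Gamma>b \<Gamma>c"
    and "{(P, c), (Q, c), (S, c), (T, c)} \<subseteq> E" "{P, Q, S, T} \<subseteq> Bs" "distinct [P, Q, S, T]"
    and "ori (\<Gamma>b P) \<noteq> ori (\<Gamma>b Q)"
  shows "ori (\<Gamma>b S) \<noteq> ori (\<Gamma>b T)"
proof
  assume ST: "ori (\<Gamma>b S) = ori (\<Gamma>b T)"
  have "ori (\<Gamma>b P) \<noteq> ori (\<Gamma>b S)" "ori (\<Gamma>b Q) \<noteq> ori (\<Gamma>b S)"
    using no_three_parallel_buses_at_connector[OF R, of S c T P]
      no_three_parallel_buses_at_connector[OF R, of S c T Q] ST assms(2-4) by auto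
  with assms(5) show False by (cases "ori (\<Gamma>b P)"; cases "ori (\<Gamma>b Q)"; cases "ori (\<Gamma>b S)") auto
qed

theorem lemma3:
  fixes Bs :: "'b set" and Cs :: "'c set" and E :: "('b \<times> 'c) set"
    and \<Gamma>b :: "'b \<Rightarrow> bus_drawing" and \<Gamma>c :: "'c \<Rightarrow> int \<times> int"
  assumes "bus_graph Bs Cs E"
    and "AB_perp Bs Cs E x y z A A' B B' C"
    and "realization Bs Cs E \<Gamma>b \<Gamma>c"
  shows "ori (\<Gamma>b B) = ori (\<Gamma>b B') \<and> ori (\<Gamma>b A) \<noteq> ori (\<Gamma>b B) \<and> ori (\<Gamma>b A) = ori (\<Gamma>b A')"
proof -
  note R = assms(3)
  note perp = assms(2)[unfolded AB_perp_def]
  have AA': "ori (\<Gamma>b A) = ori (\<Gamma>b A')"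
  proof (rule ccontr)
    assume "ori (\<Gamma>b A) \<noteq> ori (\<Gamma>b A')"
    then have "ori (\<Gamma>b B) \<noteq> ori (\<Gamma>b B')" "ori (\<Gamma>b B) \<noteq> ori (\<Gamma>b C)" "ori (\<Gamma>b B') \<noteq> ori (\<Gamma>b C)"
      using orientations_differ_at_connector[OF R, of A x A' B B']
        orientations_differ_at_connector[OF R, of A y A' B C]
        orientations_differ_at_connector[OF R, of A z A' B' C] perp by auto
    then show False by (cases "ori (\<Gamma>b B)"; cases "ori (\<Gamma>b B')"; cases "ori (\<Gamma>b C)") auto
  qed
  moreover have "ori (\<Gamma>b B) \<noteq> ori (\<Gamma>b A)" "ori (\<Gamma>b B') \<noteq> ori (\<Gamma>b A)"
    using no_three_parallel_buses_at_connector[OF R, of A x A' B]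
      no_three_parallel_buses_at_connector[OF R, of A x A' B'] AA' perp by auto
  ultimately show ?thesis by (cases "ori (\<Gamma>b A)"; cases "ori (\<Gamma>b B)"; cases "ori (\<Gamma>b B')") auto
qed

end
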